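(* If $a_n>0$ for all $n\ge2$, then $\sum_{n=2}^\infty a_n=4$.
   Context: Let $g:(-\pi^2,\infty)\to(0,\infty)$, $g(r)=\sinh(\sqrt r)/\sqrt r$ for $r>0$, $g(0)=1$, $g(r)=\sin(\sqrt{-r})/\sqrt{-r}$ for $-\pi^2<r<0$; it is a strictly increasing bijection with inverse $g^{-1}$. For $\eta>0$ define $G(\eta)=2\eta-2\,\mathrm{sgn}\big(4g^{-1}(\eta^{-1})+\pi^2\big)\sqrt{\eta^2+g^{-1}(\eta^{-1})}+g^{-1}(\eta^{-1})$. The coefficients $a_n$, $n\ge2$, are the Taylor coefficients at $\xi=0$ of $F(\xi)=(1-\xi)G\big(\frac1{1-\xi}\big)$, i.e. $F(\xi)=\sum_{n\ge2}a_n\xi^n$ near $0$ (equivalently, they are fixed by matching the right derivatives of all orders of $G$ at $\eta=1$ with those of $\sum_k a_k(\eta-1)^k/\eta^{k-1}$). *)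

theory Defs
  imports "HOL-Analysis.Analysis"
begin

definition gfun :: "real \<Rightarrow> real" where
  "gfun r = (if r > 0 then sinh (sqrt r) / sqrt r
             else if r = 0 then 1
             else sin (sqrt (- r)) / sqrt (- r))"

definition ginv :: "real \<Rightarrow> real" where
  "ginv = inv_into {- (pi\<^sup>2)<..} gfun"

definition Gfun :: "real \<Rightarrow> real" where
  "Gfun \<eta> = 2 * \<eta> - 2 * sgn (4 * ginv (1 / \<eta>) + pi\<^sup>2) * sqrt (\<eta>\<^sup>2 + ginv (1 / \<eta>))
             + ginv (1 / \<eta>)"

definition Ffun :: "real \<Rightarrow> real" where
  "Ffun \<xi> = (1 - \<xi>) * Gfun (1 / (1 - \<xi>))"

definition acoef :: "nat \<Rightarrow> real" where
  "acoef n = (deriv ^^ n) Ffun 0 / fact n"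

end

(*
  With u = 1 - xi and h = g^-1(u) one has F(xi) = v(h), where v(h) = 2 - 2 c(h) + h g(h)
  and c(h) = cosh (sqrt h): the relation c(h)^2 - h g(h)^2 = 1 gives
  u sqrt(u^-2 + h) = |c(h)|, and the sign factor in G restores the sign of c(h).
  Both g and c are entire functions of h and g' > 0 on [-pi^2, oo), so by the holomorphic
  inverse function theorem F extends holomorphically near every point of [0, 1).
  Pringsheim's theorem then shows that the Taylor series of F at 0, whose coefficients are
  nonnegative by assumption and because F(0) = F'(0) = 0, converges to F on [0, 1).
  Finally F <= 4 on [0, 1), while F(xi) tends to v(-pi^2) = 4 as xi -> 1, so the series
  of the coefficients sums to 4.
*)
theory Submission
  imports Defs "HOL-Complex_Analysis.Complex_Analysis"
begin

section \<open>Real functions with local holomorphic extensions\<close>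

definition has_holomorphic_extension_at :: "(real \<Rightarrow> real) \<Rightarrow> real \<Rightarrow> bool" where
  "has_holomorphic_extension_at f c \<longleftrightarrow> (\<exists>e>0. \<exists>F. F holomorphic_on ball (of_real c) e \<and>
      (\<forall>x. \<bar>x - c\<bar> < e \<longrightarrow> F (of_real x) = of_real (f x)))"

lemma has_field_derivative_Re_of_real:
  fixes G :: "complex \<Rightarrow> complex"
  assumes "(G has_field_derivative D) (at (of_real x))"
  shows "((\<lambda>y. Re (G (of_real y))) has_field_derivative Re D) (at x)"
proof -
  have "((\<lambda>y. G (of_real y)) has_derivative (\<lambda>h. of_real h * D)) (at x)"
    using has_derivative_compose[OF bounded_linear.has_derivative[OF bounded_linear_of_real, OF has_derivative_ident]
        assms[unfolded has_field_derivative_def]] by (simp add: mult.commute)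
  hence "((\<lambda>y. G (of_real y)) has_vector_derivative D) (at x)"
    by (simp add: has_vector_derivative_def scaleR_conv_of_real)
  thus ?thesis by (rule has_field_derivative_Re)
qed

lemma has_real_derivative_of_holomorphic_extension:
  fixes F :: "complex \<Rightarrow> complex" and f :: "real \<Rightarrow> real"
  assumes hol: "F holomorphic_on ball (of_real c) e"
    and eq: "\<And>x. \<bar>x - c\<bar> < e \<Longrightarrow> Re (F (of_real x)) = f x"
    and x: "\<bar>x - c\<bar> < e"
  shows "(f has_real_derivative Re (deriv F (of_real x))) (at x)"
proof -
  have "of_real x \<in> ball (of_real c :: complex) e"
    using x by (simp add: dist_norm abs_minus_commute flip: of_real_diff)
  hence "(F has_field_derivative deriv F (of_real x)) (at (of_real x))"
    using hol by (intro holomorphic_derivI[of _ "ball (of_real c) e"]) auto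
  hence "((\<lambda>y. Re (F (of_real y))) has_real_derivative Re (deriv F (of_real x))) (at x)"
    by (rule has_field_derivative_Re_of_real)
  then show ?thesis
  proof (rule has_field_derivative_transform_within_open[of _ _ _ "{c - e <..< c + e}"])
    show "x \<in> {c - e<..<c + e}" using x by auto
    fix y assume "y \<in> {c - e<..<c + e}"
    hence "\<bar>y - c\<bar> < e" by auto
    thus "Re (F (of_real y)) = f y" by (rule eq)
  qed auto
qed

lemma has_holomorphic_extension_at_imp_DERIV:
  assumes "has_holomorphic_extension_at f c"
  obtains D where "(f has_real_derivative D) (at c)"
proof -
  obtain e F where "0 < e" "F holomorphic_on ball (of_real c) e"
    and "\<And>x. \<bar>x - c\<bar> < e \<Longrightarrow> F (of_real x) = of_real (f x)"
    using assms unfolding has_holomorphic_extension_at_def by blast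
  then show ?thesis
    using has_real_derivative_of_holomorphic_extension[of F c e f c] that by simp
qed

lemma higher_deriv_eq_Re_higher_deriv:
  fixes F :: "complex \<Rightarrow> complex" and f :: "real \<Rightarrow> real"
  assumes hol: "F holomorphic_on ball (of_real c) e"
    and eq: "\<And>x. \<bar>x - c\<bar> < e \<Longrightarrow> F (of_real x) = of_real (f x)"
    and x: "\<bar>x - c\<bar> < e"
  shows "(deriv ^^ n) f x = Re ((deriv ^^ n) F (of_real x))"
  using x
proof (induction n arbitrary: x)
  case 0
  then show ?case using eq by simp
next
  case (Suc n)
  have "(deriv ^^ n) F holomorphic_on ball (of_real c) e"
    by (intro holomorphic_higher_deriv hol) auto
  moreover have "Re ((deriv ^^ n) F (of_real y)) = (deriv ^^ n) f y" if "\<bar>y - c\<bar> < e" for y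
    using Suc.IH[OF that] by simp
  ultimately have "((deriv ^^ n) f has_real_derivative Re (deriv ((deriv ^^ n) F) (of_real x))) (at x)"
    using Suc.prems by (rule has_real_derivative_of_holomorphic_extension)
  then show ?case using DERIV_imp_deriv by simp
qed

lemma Taylor_sums_of_holomorphic_extension:
  fixes F :: "complex \<Rightarrow> complex" and f :: "real \<Rightarrow> real"
  assumes hol: "F holomorphic_on ball (of_real c) e"
    and eq: "\<And>x. \<bar>x - c\<bar> < e \<Longrightarrow> F (of_real x) = of_real (f x)"
    and t: "\<bar>x0 - c\<bar> + \<bar>t\<bar> < e"
  shows "(\<lambda>k. (deriv ^^ k) f x0 / fact k * t ^ k) sums f (x0 + t)"
proof -
  define r where "r = e - \<bar>x0 - c\<bar>"
  have "ball (of_real x0) r \<subseteq> ball (of_real c :: complex) e"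
  proof
    fix z :: complex assume "z \<in> ball (of_real x0) r"
    moreover have "dist (of_real c) (of_real x0 :: complex) = \<bar>x0 - c\<bar>"
      by (simp add: dist_norm abs_minus_commute flip: of_real_diff)
    ultimately show "z \<in> ball (of_real c) e"
      using dist_triangle[of "of_real c" z "of_real x0"] by (simp add: r_def)
  qed
  hence "F holomorphic_on ball (of_real x0) r"
    using hol by (rule holomorphic_on_subset[rotated])
  moreover have "of_real (x0 + t) \<in> ball (of_real x0 :: complex) r"
    using t by (simp add: r_def dist_norm)
  ultimately have "(\<lambda>k. (deriv ^^ k) F (of_real x0) / fact k * of_real t ^ k) sums F (of_real (x0 + t))"
    using holomorphic_power_series by fastforce
  hence "(\<lambda>k. Re ((deriv ^^ k) F (of_real x0) / fact k * of_real t ^ k)) sums Re (F (of_real (x0 + t)))"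
    by (rule sums_Re)
  moreover have "Re ((deriv ^^ k) F (of_real x0) / fact k * of_real t ^ k) = (deriv ^^ k) f x0 / fact k * t ^ k" for k
  proof -
    have Re_mult_of_real: "Re (w * of_real s) = Re w * s" for w s by simp
    have "Re ((deriv ^^ k) F (of_real x0) / fact k * of_real t ^ k)
        = Re ((deriv ^^ k) F (of_real x0) * of_real (t ^ k / fact k))"
      by simp
    also have "\<dots> = Re ((deriv ^^ k) F (of_real x0)) * (t ^ k / fact k)"
      by (rule Re_mult_of_real)
    finally show ?thesis
      using higher_deriv_eq_Re_higher_deriv[OF hol eq, of x0 k] t by simp
  qed
  moreover have "Re (F (of_real (x0 + t))) = f (x0 + t)"
    using eq[of "x0 + t"] t by simp
  ultimately show ?thesis by simp
qed

section \<open>Power series\<close>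

lemma fps_nth_deriv_funpow:
  fixes A :: "'a :: field_char_0 fps"
  shows "((fps_deriv ^^ k) A) $ n = A $ (n + k) * fact (n + k) / fact n"
proof (induction k arbitrary: n)
  case 0 then show ?case by simp
next
  case (Suc k)
  have "((fps_deriv ^^ Suc k) A) $ n = of_nat (n + 1) * ((fps_deriv ^^ k) A) $ (n + 1)"
    by simp
  also have "\<dots> = of_nat (n + 1) * (A $ (n + 1 + k) * fact (n + 1 + k) / fact (n + 1))"
    using Suc.IH by simp
  also have "\<dots> = A $ (n + Suc k) * fact (n + Suc k) / fact n"
    by (simp add: field_simps fact_Suc del: of_nat_Suc)
  finally show ?case .
qed

lemma fps_conv_radius_deriv_funpow:
  fixes A :: "'a :: {banach, real_normed_field} fps"
  shows "fps_conv_radius A \<le> fps_conv_radius ((fps_deriv ^^ k) A)"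
  by (induction k) (auto intro: order_trans fps_conv_radius_deriv)

lemma higher_deriv_eval_fps:
  fixes A :: "'a :: {banach, real_normed_field} fps"
  assumes "norm x < fps_conv_radius A"
  shows "(deriv ^^ k) (eval_fps A) x = eval_fps ((fps_deriv ^^ k) A) x"
  using assms
proof (induction k arbitrary: A)
  case 0 then show ?case by simp
next
  case (Suc k A)
  have "eventually (\<lambda>z. z \<in> eball 0 (fps_conv_radius A)) (nhds x)"
    using Suc.prems by (intro eventually_nhds_in_open) auto
  hence "eventually (\<lambda>z. deriv (eval_fps A) z = eval_fps (fps_deriv A) z) (nhds x)"
    by eventually_elim (simp add: eval_fps_deriv)
  hence "(deriv ^^ k) (deriv (eval_fps A)) x = (deriv ^^ k) (eval_fps (fps_deriv A)) x"
    by (intro higher_deriv_cong_ev refl)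
  also have "\<dots> = eval_fps ((fps_deriv ^^ k) (fps_deriv A)) x"
    using Suc.prems fps_conv_radius_deriv[of A] by (intro Suc.IH) (auto intro: less_le_trans)
  finally show ?case
    by (simp only: funpow_Suc_right o_def)
qed

lemma sums_higher_deriv_eval_fps:
  fixes A :: "'a :: {banach, real_normed_field} fps"
  assumes "norm x < fps_conv_radius A"
  shows "(\<lambda>n. A $ (n + k) * of_nat ((n + k) choose k) * x ^ n) sums ((deriv ^^ k) (eval_fps A) x / fact k)"
proof -
  have "norm x < fps_conv_radius ((fps_deriv ^^ k) A)"
    using assms fps_conv_radius_deriv_funpow by (rule less_le_trans)
  hence "(\<lambda>n. A $ (n + k) * fact (n + k) / fact n * x ^ n) sums eval_fps ((fps_deriv ^^ k) A) x"
    using sums_eval_fps by (fastforce simp: fps_nth_deriv_funpow)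
  hence "(\<lambda>n. A $ (n + k) * fact (n + k) / fact n * x ^ n / fact k) sums (eval_fps ((fps_deriv ^^ k) A) x / fact k)"
    by (rule sums_divide)
  moreover have "A $ (n + k) * fact (n + k) / fact n * x ^ n / fact k = A $ (n + k) * of_nat ((n + k) choose k) * x ^ n" for n
    by (simp add: binomial_fact)
  ultimately show ?thesis
    using higher_deriv_eval_fps[OF assms] by simp
qed

lemma fps_conv_radius_eq_inf_if_norm_nth_le:
  fixes A :: "'a :: {banach, real_normed_field} fps"
  assumes "\<And>n. norm (A $ n) \<le> 1 / fact n"
  shows "fps_conv_radius A = \<infinity>"
  unfolding fps_conv_radius_def
proof (rule conv_radius_inftyI'')
  fix z :: 'a
  show "summable (\<lambda>n. A $ n * z ^ n)"
  proof (rule summable_comparison_test)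
    show "\<exists>N. \<forall>n\<ge>N. norm (A $ n * z ^ n) \<le> norm z ^ n /\<^sub>R fact n"
      using assms by (auto simp: norm_mult norm_power divide_inverse intro!: mult_right_mono)
    show "summable (\<lambda>n. norm z ^ n /\<^sub>R fact n)" by (rule summable_exp_generic)
  qed
qed

lemma eval_fps_of_real:
  fixes A :: "'a :: {banach, real_normed_field} fps" and B :: "real fps"
  assumes "\<And>n. A $ n = of_real (B $ n)" "fps_conv_radius A = \<infinity>" "fps_conv_radius B = \<infinity>"
  shows "eval_fps A (of_real x) = of_real (eval_fps B x)"
proof -
  have "(\<lambda>n. B $ n * x ^ n) sums eval_fps B x"
    using assms by (intro sums_eval_fps) auto
  hence "(\<lambda>n. of_real (B $ n * x ^ n) :: 'a) sums of_real (eval_fps B x)"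
    by (rule sums_of_real)
  moreover have "(\<lambda>n. A $ n * of_real x ^ n) sums eval_fps A (of_real x)"
    using assms by (intro sums_eval_fps) auto
  ultimately show ?thesis
    using assms(1) by (simp add: sums_iff)
qed

lemma sum_diagonals_eq_sum_triangle:
  fixes c :: "nat \<Rightarrow> nat \<Rightarrow> 'a :: comm_monoid_add"
  shows "(\<Sum>m<M. \<Sum>k\<le>m. c k (m - k)) = (\<Sum>p\<in>{p. fst p + snd p < M}. c (fst p) (snd p))"
proof -
  have "(\<Sum>m<M. \<Sum>k\<le>m. c k (m - k)) = (\<Sum>q\<in>Sigma {..<M} (\<lambda>m. {..m}). c (snd q) (fst q - snd q))"
    using sum.Sigma[of "{..<M}" atMost "\<lambda>m k. c k (m - k)"] by (simp add: split_beta)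
  also have "\<dots> = (\<Sum>p\<in>{p. fst p + snd p < M}. c (fst p) (snd p))"
    by (rule sum.reindex_bij_witness[where i = "\<lambda>p. (fst p + snd p, fst p)" and j = "\<lambda>q. (snd q, fst q - snd q)"])
       auto
  finally show ?thesis .
qed

lemma sum_diagonals_le_nonneg:
  fixes c :: "nat \<Rightarrow> nat \<Rightarrow> real"
  assumes nonneg: "\<And>k n. 0 \<le> c k n"
    and rows: "\<And>k. (\<lambda>n. c k n) sums d k"
    and total: "d sums D"
  shows "(\<Sum>m<M. \<Sum>k\<le>m. c k (m - k)) \<le> D"
proof -
  have d_nonneg: "0 \<le> d k" for k
    using rows[of k] nonneg by (metis sums_iff suminf_nonneg)
  have "(\<Sum>m<M. \<Sum>k\<le>m. c k (m - k)) \<le> (\<Sum>p\<in>{..<M} \<times> {..<M}. c (fst p) (snd p))"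
    unfolding sum_diagonals_eq_sum_triangle by (rule sum_mono2) (auto intro: nonneg)
  also have "\<dots> = (\<Sum>k<M. \<Sum>n<M. c k n)"
    by (simp add: sum.cartesian_product case_prod_beta)
  also have "\<dots> \<le> (\<Sum>k<M. d k)"
    using rows nonneg by (intro sum_mono) (metis sums_iff sum_le_suminf finite_lessThan)
  also have "\<dots> \<le> D"
    using total d_nonneg by (metis sums_iff sum_le_suminf finite_lessThan)
  finally show ?thesis .
qed

lemma sums_diagonals_nonneg:
  fixes c :: "nat \<Rightarrow> nat \<Rightarrow> real"
  assumes nonneg: "\<And>k n. 0 \<le> c k n"
    and rows: "\<And>k. (\<lambda>n. c k n) sums d k"
    and total: "d sums D"
  shows "(\<lambda>m. \<Sum>k\<le>m. c k (m - k)) sums D"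
proof -
  have partial_le: "(\<Sum>m<M. \<Sum>k\<le>m. c k (m - k)) \<le> D" for M
    using assms by (rule sum_diagonals_le_nonneg)
  have summable: "summable (\<lambda>m. \<Sum>k\<le>m. c k (m - k))"
    using nonneg partial_le by (intro summableI_nonneg_bounded) (auto intro: sum_nonneg)
  define S where "S = (\<Sum>m. \<Sum>k\<le>m. c k (m - k))"
  have le_S: "(\<Sum>k<K. \<Sum>n<N. c k n) \<le> S" for K N
  proof -
    have "finite {p :: nat \<times> nat. fst p + snd p < K + N}"
      by (rule finite_subset[of _ "{..<K + N} \<times> {..<K + N}"]) auto
    moreover have "(\<Sum>k<K. \<Sum>n<N. c k n) = (\<Sum>p\<in>{..<K} \<times> {..<N}. c (fst p) (snd p))"
      by (simp add: sum.cartesian_product case_prod_beta)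
    ultimately have "(\<Sum>k<K. \<Sum>n<N. c k n) \<le> (\<Sum>p\<in>{p. fst p + snd p < K + N}. c (fst p) (snd p))"
      by (auto intro!: sum_mono2 nonneg)
    also have "\<dots> \<le> S"
      unfolding S_def sum_diagonals_eq_sum_triangle[symmetric]
      using summable nonneg by (intro sum_le_suminf) (auto intro: sum_nonneg)
    finally show ?thesis .
  qed
  have "(\<Sum>k<K. d k) \<le> S" for K
  proof (rule LIMSEQ_le_const2)
    show "(\<lambda>N. \<Sum>k<K. \<Sum>n<N. c k n) \<longlonglongrightarrow> (\<Sum>k<K. d k)"
      using rows by (intro tendsto_sum) (auto simp: sums_def)
  qed (use le_S in auto)
  hence "D \<le> S"
    using total suminf_le_const by (metis sums_iff)
  moreover have "S \<le> D"
    unfolding S_def using summable partial_le by (rule suminf_le_const)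
  ultimately show ?thesis
    using summable by (simp add: S_def sums_iff)
qed

lemma power_series_reexpand_nonneg:
  fixes a :: "nat \<Rightarrow> real"
  assumes nonneg: "\<And>n. 0 \<le> a n" "0 \<le> x0" "0 \<le> t"
    and coeffs: "\<And>k. (\<lambda>n. a (n + k) * of_nat ((n + k) choose k) * x0 ^ n) sums T k"
    and taylor: "(\<lambda>k. T k * t ^ k) sums s"
  shows "(\<lambda>m. a m * (x0 + t) ^ m) sums s"
proof -
  define c where "c k n = a (n + k) * of_nat ((n + k) choose k) * x0 ^ n * t ^ k" for k n
  have "(\<lambda>m. \<Sum>k\<le>m. c k (m - k)) sums s"
  proof (rule sums_diagonals_nonneg[OF _ _ taylor])
    show "0 \<le> c k n" for k n
      using nonneg by (simp add: c_def)
    show "(\<lambda>n. c k n) sums (T k * t ^ k)" for k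
      unfolding c_def using coeffs by (rule sums_mult2)
  qed
  moreover have "(\<Sum>k\<le>m. c k (m - k)) = a m * (x0 + t) ^ m" for m
  proof -
    have "a m * (x0 + t) ^ m = (\<Sum>k\<le>m. a m * (of_nat (m choose k) * t ^ k * x0 ^ (m - k)))"
      by (simp add: binomial_ring[of t x0] add.commute sum_distrib_left)
    also have "\<dots> = (\<Sum>k\<le>m. c k (m - k))"
      by (intro sum.cong) (auto simp: c_def)
    finally show ?thesis ..
  qed
  ultimately show ?thesis by simp
qed

lemma Taylor_coeffs_of_power_series:
  fixes f :: "real \<Rightarrow> real" and a :: "nat \<Rightarrow> real"
  assumes sums: "\<And>x. 0 \<le> x \<Longrightarrow> x < b \<Longrightarrow> (\<lambda>n. a n * x ^ n) sums f x"
    and x0: "0 < x0" "x0 < b"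
  shows "(\<lambda>n. a (n + k) * of_nat ((n + k) choose k) * x0 ^ n) sums ((deriv ^^ k) f x0 / fact k)"
proof -
  define A where "A = Abs_fps a"
  have radius: "ereal b \<le> fps_conv_radius A"
    unfolding fps_conv_radius_def A_def fps_nth_Abs_fps
  proof (rule conv_radius_geI_ex')
    fix r :: real assume "0 < r" "ereal r < ereal b"
    then show "summable (\<lambda>n. a n * of_real r ^ n)"
      using sums[of r] by (auto simp: sums_iff)
  qed
  have below_radius: "norm x < fps_conv_radius A" if "0 \<le> x" "x < b" for x
  proof -
    have "ereal (norm x) < ereal b" using that by simp
    thus ?thesis using radius by (rule less_le_trans)
  qed
  have "eventually (\<lambda>x. x \<in> {0<..<b}) (nhds x0)"
    using x0 by (intro eventually_nhds_in_open) auto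
  hence "eventually (\<lambda>x. f x = eval_fps A x) (nhds x0)"
  proof eventually_elim
    case (elim x)
    then show ?case
      using sums[of x] sums_eval_fps[OF below_radius, of x] by (auto simp: A_def sums_iff)
  qed
  hence "(deriv ^^ k) f x0 = (deriv ^^ k) (eval_fps A) x0"
    by (intro higher_deriv_cong_ev refl)
  moreover have "norm x0 < fps_conv_radius A"
    using x0 by (intro below_radius) auto
  ultimately show ?thesis
    using sums_higher_deriv_eval_fps[of x0 A k] by (simp add: A_def)
qed

(* Re-expand the series around a point x0 just below b: the Taylor coefficients of f at x0
   come from the series, and the resulting double series has nonnegative terms. *)
lemma power_series_sums_beyond:
  fixes f :: "real \<Rightarrow> real" and a :: "nat \<Rightarrow> real"
  assumes nonneg: "\<And>n. 0 \<le> a n"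
    and sums: "\<And>x. 0 \<le> x \<Longrightarrow> x < b \<Longrightarrow> (\<lambda>n. a n * x ^ n) sums f x"
    and "0 < b" and "has_holomorphic_extension_at f b"
  obtains b' where "b < b'" "\<And>x. 0 \<le> x \<Longrightarrow> x < b' \<Longrightarrow> (\<lambda>n. a n * x ^ n) sums f x"
proof -
  obtain e F where "0 < e" and hol: "F holomorphic_on ball (of_real b) e"
    and eq: "\<And>x. \<bar>x - b\<bar> < e \<Longrightarrow> F (of_real x) = of_real (f x)"
    using assms(4) unfolding has_holomorphic_extension_at_def by blast
  define \<epsilon> where "\<epsilon> = min e b"
  have \<epsilon>: "0 < \<epsilon>" "\<epsilon> \<le> e" "\<epsilon> \<le> b" using \<open>0 < e\<close> \<open>0 < b\<close> by (auto simp: \<epsilon>_def)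
  define x0 where "x0 = b - \<epsilon> / 4"
  have x0: "0 < x0" "x0 < b" using \<epsilon> by (auto simp: x0_def)
  have reexpanded: "(\<lambda>m. a m * (x0 + t) ^ m) sums f (x0 + t)" if "0 \<le> t" "t < 3 * \<epsilon> / 4" for t
  proof (rule power_series_reexpand_nonneg[OF nonneg _ \<open>0 \<le> t\<close>])
    show "0 \<le> x0" using x0 by simp
    show "(\<lambda>n. a (n + k) * of_nat ((n + k) choose k) * x0 ^ n) sums ((deriv ^^ k) f x0 / fact k)" for k
      using sums x0 by (rule Taylor_coeffs_of_power_series)
    show "(\<lambda>k. (deriv ^^ k) f x0 / fact k * t ^ k) sums f (x0 + t)"
      using that \<epsilon> by (intro Taylor_sums_of_holomorphic_extension[OF hol eq]) (auto simp: x0_def)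
  qed
  show ?thesis
  proof (rule that[of "x0 + 3 * \<epsilon> / 4"])
    show "b < x0 + 3 * \<epsilon> / 4" using \<epsilon> by (simp add: x0_def)
    fix x assume "0 \<le> x" "x < x0 + 3 * \<epsilon> / 4"
    then show "(\<lambda>n. a n * x ^ n) sums f x"
      using sums reexpanded[of "x - x0"] x0 by (cases "x < b") auto
  qed
qed

(* By power_series_sums_beyond, the supremum of the radii below which the series
   represents f cannot be smaller than R. *)
lemma Taylor_sums_Pringsheim:
  fixes f :: "real \<Rightarrow> real"
  assumes ext: "\<And>c. 0 \<le> c \<Longrightarrow> c < R \<Longrightarrow> has_holomorphic_extension_at f c"
    and nonneg: "\<And>n. 0 \<le> (deriv ^^ n) f 0"
    and x: "0 \<le> x" "x < R"
  shows "(\<lambda>n. (deriv ^^ n) f 0 / fact n * x ^ n) sums f x"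
proof -
  define a where "a n = (deriv ^^ n) f 0 / fact n" for n
  have a_nonneg: "0 \<le> a n" for n using nonneg[of n] by (simp add: a_def)
  define good where "good b \<longleftrightarrow> (\<forall>x. 0 \<le> x \<and> x < b \<longrightarrow> (\<lambda>n. a n * x ^ n) sums f x)" for b
  define T where "T = {b. b \<le> R \<and> good b}"
  define \<rho> where "\<rho> = Sup T"
  have "0 < R" using x by simp
  then obtain e F where "0 < e" and hol: "F holomorphic_on ball (of_real 0) e"
    and eq: "\<And>x. \<bar>x - 0\<bar> < e \<Longrightarrow> F (of_real x) = of_real (f x)"
    using ext[of 0] unfolding has_holomorphic_extension_at_def by blast
  have "good (min e R)"
    unfolding good_def a_def
  proof (intro allI impI)
    fix x assume "0 \<le> x \<and> x < min e R"
    thus "(\<lambda>n. (deriv ^^ n) f 0 / fact n * x ^ n) sums f x"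
      using Taylor_sums_of_holomorphic_extension[OF hol eq, of 0 x] by simp
  qed
  hence "min e R \<in> T" by (simp add: T_def)
  moreover have bdd: "bdd_above T" by (auto simp: T_def bdd_above_def)
  ultimately have "min e R \<le> \<rho>" unfolding \<rho>_def by (rule cSup_upper)
  hence \<rho>_pos: "0 < \<rho>" using \<open>0 < e\<close> \<open>0 < R\<close> by linarith
  have "T \<noteq> {}" using \<open>min e R \<in> T\<close> by blast
  hence \<rho>_le: "\<rho> \<le> R" unfolding \<rho>_def by (rule cSup_least) (auto simp: T_def)
  have good_\<rho>: "good \<rho>"
    unfolding good_def
  proof (intro allI impI)
    fix x assume x: "0 \<le> x \<and> x < \<rho>"
    then obtain b where "b \<in> T" "x < b"
      using less_cSup_iff[OF \<open>T \<noteq> {}\<close> bdd] by (auto simp: \<rho>_def)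
    thus "(\<lambda>n. a n * x ^ n) sums f x" using x by (auto simp: T_def good_def)
  qed
  have "\<rho> = R"
  proof (rule ccontr)
    assume "\<rho> \<noteq> R"
    with \<rho>_le have "\<rho> < R" by simp
    have ext_\<rho>: "has_holomorphic_extension_at f \<rho>"
      using ext \<rho>_pos \<open>\<rho> < R\<close> by simp
    have sums_\<rho>: "(\<lambda>n. a n * x ^ n) sums f x" if "0 \<le> x" "x < \<rho>" for x
      using good_\<rho> that unfolding good_def by blast
    obtain b' where "\<rho> < b'" and sums_b': "\<And>x. 0 \<le> x \<Longrightarrow> x < b' \<Longrightarrow> (\<lambda>n. a n * x ^ n) sums f x"
      using power_series_sums_beyond[of a, OF a_nonneg sums_\<rho> \<rho>_pos ext_\<rho>] by blast
    hence "min b' R \<in> T" using sums_b' by (auto simp: T_def good_def)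
    hence "min b' R \<le> \<rho>" unfolding \<rho>_def using bdd by (rule cSup_upper)
    with \<open>\<rho> < b'\<close> \<open>\<rho> < R\<close> show False by linarith
  qed
  with good_\<rho> x show ?thesis by (auto simp: good_def a_def)
qed

lemma sum_le_if_nonneg_power_series_le:
  fixes a :: "nat \<Rightarrow> real"
  assumes nonneg: "\<And>n. 0 \<le> a n"
    and sums: "\<And>x. 0 \<le> x \<Longrightarrow> x < 1 \<Longrightarrow> (\<lambda>n. a n * x ^ n) sums f x"
    and upper: "\<And>x. 0 \<le> x \<Longrightarrow> x < 1 \<Longrightarrow> f x \<le> L"
  shows "(\<Sum>n<N. a n) \<le> L"
proof -
  have "((\<lambda>x. \<Sum>n<N. a n * x ^ n) \<longlongrightarrow> (\<Sum>n<N. a n * 1 ^ n)) (at_left 1)"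
    by (intro tendsto_intros)
  moreover have "eventually (\<lambda>x. x \<in> {0<..<1}) (at_left (1 :: real))"
    by (rule eventually_at_left_real) simp
  hence "eventually (\<lambda>x. (\<Sum>n<N. a n * x ^ n) \<le> L) (at_left 1)"
  proof eventually_elim
    case (elim x)
    hence "(\<Sum>n<N. a n * x ^ n) \<le> (\<Sum>n. a n * x ^ n)"
      using sums[of x] nonneg by (intro sum_le_suminf) (auto simp: sums_iff)
    also have "\<dots> \<le> L"
      using elim sums[of x] upper[of x] by (simp add: sums_iff)
    finally show ?case .
  qed
  ultimately show ?thesis
    using tendsto_le[OF trivial_limit_at_left_real tendsto_const] by fastforce
qed

lemma sums_eq_sup_of_nonneg_power_series:
  fixes a :: "nat \<Rightarrow> real"
  assumes nonneg: "\<And>n. 0 \<le> a n"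
    and sums: "\<And>x. 0 \<le> x \<Longrightarrow> x < 1 \<Longrightarrow> (\<lambda>n. a n * x ^ n) sums f x"
    and upper: "\<And>x. 0 \<le> x \<Longrightarrow> x < 1 \<Longrightarrow> f x \<le> L"
    and approx: "\<And>\<epsilon>. 0 < \<epsilon> \<Longrightarrow> \<exists>x. 0 \<le> x \<and> x < 1 \<and> L - \<epsilon> < f x"
  shows "a sums L"
proof -
  have partial_le: "(\<Sum>n<N. a n) \<le> L" for N
    using nonneg sums upper by (rule sum_le_if_nonneg_power_series_le)
  have summable: "summable a"
    using nonneg partial_le by (rule summableI_nonneg_bounded)
  have "suminf a \<le> L"
    using summable partial_le by (rule suminf_le_const)
  moreover have "L \<le> suminf a + \<epsilon>" if \<epsilon>: "0 < \<epsilon>" for \<epsilon>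
  proof -
    obtain x where x: "0 \<le> x" "x < 1" "L - \<epsilon> < f x"
      using approx[OF \<epsilon>] by blast
    have "f x = (\<Sum>n. a n * x ^ n)"
      using sums[OF x(1,2)] by (simp add: sums_iff)
    also have "\<dots> \<le> suminf a"
    proof (rule suminf_le)
      show "a n * x ^ n \<le> a n" for n
        using nonneg[of n] x by (simp add: mult_left_le power_le_one)
    qed (use sums[OF x(1,2)] summable in \<open>auto simp: sums_iff\<close>)
    finally show ?thesis using x(3) by simp
  qed
  hence "L \<le> suminf a" by (rule field_le_epsilon)
  ultimately show ?thesis
    using summable by (simp add: sums_iff)
qed

section \<open>The entire functions g and c\<close>

lemma sum_atLeastLessThan_add_2: "sum f {m..<m + 2} = f m + f (Suc m)"
  by (simp add: numeral_2_eq_2)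

lemma inverse_fact_diff: "1 / fact n - 1 / fact (Suc n) = (of_nat n / fact (Suc n) :: 'a :: field_char_0)"
proof -
  have "(1 + of_nat n :: 'a) \<noteq> 0"
    using of_nat_neq_0[of n] by (simp add: add.commute)
  hence "1 / fact n = (1 + of_nat n) / (fact (Suc n) :: 'a)"
    by simp
  also have "\<dots> - 1 / fact (Suc n) = ((1 + of_nat n) - 1) / fact (Suc n)"
    by (rule diff_divide_distrib[symmetric])
  finally show ?thesis by simp
qed

lemma sin_gt_mult_cos:
  assumes "0 < s" "s \<le> pi"
  shows "s * cos s < sin s"
proof -
  define \<phi> where "\<phi> x = sin x - x * cos x" for x :: real
  have "\<phi> 0 < \<phi> s"
  proof (rule DERIV_pos_imp_increasing_open[OF assms(1)])
    fix x assume "0 < x" "x < s"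
    hence "0 < x * sin x" using assms by (intro mult_pos_pos sin_gt_zero) auto
    moreover have "(\<phi> has_real_derivative x * sin x) (at x)"
      unfolding \<phi>_def by (auto intro!: derivative_eq_intros simp: algebra_simps)
    ultimately show "\<exists>y. (\<phi> has_real_derivative y) (at x) \<and> 0 < y" by blast
  next
    show "continuous_on {0..s} \<phi>" unfolding \<phi>_def by (intro continuous_intros)
  qed
  thus ?thesis by (simp add: \<phi>_def)
qed

(* The power series in h of sinh (sqrt h) / sqrt h and of cosh (sqrt h). *)
definition g_fps :: "'a :: field_char_0 fps" where
  "g_fps = Abs_fps (\<lambda>k. 1 / fact (2 * k + 1))"

definition c_fps :: "'a :: field_char_0 fps" where
  "c_fps = Abs_fps (\<lambda>k. 1 / fact (2 * k))"

definition g_ser :: "'a :: {banach, real_normed_field} \<Rightarrow> 'a" where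
  "g_ser = eval_fps g_fps"

definition c_ser :: "'a :: {banach, real_normed_field} \<Rightarrow> 'a" where
  "c_ser = eval_fps c_fps"

lemma fps_conv_radius_g_fps [simp]: "fps_conv_radius (g_fps :: 'a :: {banach, real_normed_field} fps) = \<infinity>"
proof (rule fps_conv_radius_eq_inf_if_norm_nth_le)
  have "fact n \<le> (fact (2 * n + 1) :: real)" for n by (rule fact_mono) simp
  then show "norm ((g_fps :: 'a fps) $ n) \<le> 1 / fact n" for n
    by (simp add: g_fps_def norm_divide divide_left_mono del: fact_Suc)
qed

lemma fps_conv_radius_c_fps [simp]: "fps_conv_radius (c_fps :: 'a :: {banach, real_normed_field} fps) = \<infinity>"
proof (rule fps_conv_radius_eq_inf_if_norm_nth_le)
  have "fact n \<le> (fact (2 * n) :: real)" for n by (rule fact_mono) simp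
  then show "norm ((c_fps :: 'a fps) $ n) \<le> 1 / fact n" for n
    by (simp add: c_fps_def norm_divide divide_left_mono del: fact_Suc)
qed

lemma g_ser_of_real: "g_ser (of_real x) = of_real (g_ser x)"
  unfolding g_ser_def
proof (rule eval_fps_of_real)
  show "(g_fps :: 'a fps) $ n = of_real (g_fps $ n)" for n by (simp add: g_fps_def)
qed simp_all

lemma c_ser_of_real: "c_ser (of_real x) = of_real (c_ser x)"
  unfolding c_ser_def
proof (rule eval_fps_of_real)
  show "(c_fps :: 'a fps) $ n = of_real (c_fps $ n)" for n by (simp add: c_fps_def)
qed simp_all

lemma g_ser_0 [simp]: "g_ser 0 = 1"
  by (simp add: g_ser_def eval_fps_at_0 g_fps_def)

lemma c_ser_0 [simp]: "c_ser 0 = 1"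
  by (simp add: c_ser_def eval_fps_at_0 c_fps_def)

lemma g_ser_sums: "(\<lambda>n. h ^ n / fact (2 * n + 1)) sums g_ser (h :: real)"
proof -
  have "(\<lambda>n. g_fps $ n * h ^ n) sums g_ser h"
    using sums_eval_fps[of h g_fps] by (simp add: g_ser_def)
  then show ?thesis by (simp add: g_fps_def)
qed

lemma c_ser_sums: "(\<lambda>n. h ^ n / fact (2 * n)) sums c_ser (h :: real)"
proof -
  have "(\<lambda>n. c_fps $ n * h ^ n) sums c_ser h"
    using sums_eval_fps[of h c_fps] by (simp add: c_ser_def)
  then show ?thesis by (simp add: c_fps_def)
qed

lemma g_ser_neg:
  fixes h :: real
  assumes "h < 0"
  shows "g_ser h = sin (sqrt (- h)) / sqrt (- h)"
proof -
  define s where "s = sqrt (- h)"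
  have s: "0 < s" "h = - (s ^ 2)" using assms by (auto simp: s_def)
  have "(\<lambda>n. (- 1) ^ n / fact (2 * n + 1) * s ^ (2 * n + 1) / s) sums (sin s / s)"
    by (intro sums_divide sin_paired)
  moreover have "(- 1) ^ n / fact (2 * n + 1) * s ^ (2 * n + 1) / s = h ^ n / fact (2 * n + 1)" for n
    using s by (simp add: power_minus[of "s^2"] power_mult)
  ultimately show ?thesis
    using g_ser_sums[of h] by (simp add: sums_iff s_def)
qed

lemma c_ser_nonpos:
  fixes h :: real
  assumes "h \<le> 0"
  shows "c_ser h = cos (sqrt (- h))"
proof -
  define s where "s = sqrt (- h)"
  have s: "h = - (s ^ 2)" using assms by (simp add: s_def)
  have "(\<lambda>n. (- 1) ^ n / fact (2 * n) * s ^ (2 * n)) sums (cos s)"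
    by (rule cos_paired)
  moreover have "(- 1) ^ n / fact (2 * n) * s ^ (2 * n) = h ^ n / fact (2 * n)" for n
    using s by (simp add: power_minus[of "s^2"] power_mult)
  ultimately show ?thesis
    using c_ser_sums[of h] by (simp add: sums_iff s_def)
qed

lemma g_ser_pos:
  fixes h :: real
  assumes "0 < h"
  shows "g_ser h = sinh (sqrt h) / sqrt h"
proof -
  define t where "t = sqrt h"
  have t: "0 < t" "h = t ^ 2" using assms by (auto simp: t_def)
  have "(\<lambda>n. \<Sum>i\<in>{n * 2..<n * 2 + 2}. if even i then 0 else t ^ i /\<^sub>R fact i) sums sinh t"
    by (intro sums_group sinh_converges) auto
  hence "(\<lambda>n. t ^ (2 * n + 1) / fact (2 * n + 1) / t) sums (sinh t / t)"
    by (intro sums_divide) (simp add: sum_atLeastLessThan_add_2 mult.commute divide_inverse)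
  moreover have "t ^ (2 * n + 1) / fact (2 * n + 1) / t = h ^ n / fact (2 * n + 1)" for n
    using t by (simp add: power_mult)
  ultimately show ?thesis
    using g_ser_sums[of h] by (simp add: sums_iff t_def)
qed

lemma c_ser_nonneg:
  fixes h :: real
  assumes "0 \<le> h"
  shows "c_ser h = cosh (sqrt h)"
proof -
  define t where "t = sqrt h"
  have t: "h = t ^ 2" using assms by (simp add: t_def)
  have "(\<lambda>n. \<Sum>i\<in>{n * 2..<n * 2 + 2}. if even i then t ^ i /\<^sub>R fact i else 0) sums cosh t"
    by (intro sums_group cosh_converges) auto
  hence "(\<lambda>n. t ^ (2 * n) / fact (2 * n)) sums cosh t"
    by (simp add: sum_atLeastLessThan_add_2 mult.commute divide_inverse)
  moreover have "t ^ (2 * n) / fact (2 * n) = h ^ n / fact (2 * n)" for n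
    using t by (simp add: power_mult)
  ultimately show ?thesis
    using c_ser_sums[of h] by (simp add: sums_iff t_def)
qed

lemma gfun_eq_g_ser: "gfun = g_ser"
  by (auto simp: fun_eq_iff gfun_def g_ser_neg g_ser_pos)

lemma g_ser_minus_pi_sq [simp]: "g_ser (- (pi ^ 2)) = 0"
  by (simp add: g_ser_neg)

lemma c_ser_minus_pi_sq [simp]: "c_ser (- (pi ^ 2)) = -1"
  by (simp add: c_ser_nonpos)

lemma c_ser_sq_minus_g_ser_sq: "c_ser h ^ 2 - h * g_ser h ^ 2 = (1 :: real)"
proof -
  consider "0 < h" | "h = 0" | "h < 0" by linarith
  then show ?thesis
  proof cases
    case 1
    define t where "t = sqrt h"
    have "0 < t" "h = t ^ 2" using 1 by (auto simp: t_def)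
    then show ?thesis
      using 1 hyperbolic_pythagoras[of t]
      by (simp add: c_ser_nonneg g_ser_pos power_divide flip: t_def)
  next
    case 3
    define s where "s = sqrt (- h)"
    have "0 < s" "h = - (s ^ 2)" using 3 by (auto simp: s_def)
    then show ?thesis
      using 3 sin_cos_squared_add[of s]
      by (simp add: c_ser_nonpos g_ser_neg power_divide flip: s_def)
  qed simp
qed

lemma sgn_mult_abs_c_ser:
  fixes h :: real
  assumes "- (pi ^ 2) < h"
  shows "sgn (4 * h + pi ^ 2) * \<bar>c_ser h\<bar> = c_ser h"
proof (cases "0 \<le> h")
  case True
  then show ?thesis by (simp add: c_ser_nonneg add_nonneg_pos)
next
  case False
  define s where "s = sqrt (- h)"
  have s: "0 < s" "h = - (s ^ 2)" "c_ser h = cos s"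
    using False by (auto simp: s_def c_ser_nonpos)
  have "s < pi"
    using real_sqrt_less_mono[of "- h" "pi ^ 2"] assms by (simp add: s_def)
  have factor: "4 * h + pi ^ 2 = (pi - 2 * s) * (pi + 2 * s)"
    using s(2) by (simp add: algebra_simps power2_eq_square)
  have "0 < pi + 2 * s" using s(1) pi_gt_zero by linarith
  consider "s < pi / 2" | "s = pi / 2" | "pi / 2 < s" by linarith
  then show ?thesis
  proof cases
    case 1
    hence "0 < cos s" "0 < 4 * h + pi ^ 2"
      using s \<open>0 < pi + 2 * s\<close> unfolding factor by (auto intro: cos_gt_zero_pi)
    then show ?thesis using s by simp
  next
    case 2
    hence "cos s = 0" by (simp only: cos_pi_half)
    then show ?thesis using s by simp
  next
    case 3
    hence "cos s < 0" "4 * h + pi ^ 2 < 0"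
      using \<open>s < pi\<close> \<open>0 < pi + 2 * s\<close> unfolding factor
      by (auto intro: cos_lt_zero_pi mult_neg_pos)
    then show ?thesis using s by simp
  qed
qed

lemma has_field_derivative_g_ser: "(g_ser has_field_derivative eval_fps (fps_deriv g_fps) z) (at z)"
  unfolding g_ser_def by (rule has_field_derivative_eval_fps) simp

lemma has_field_derivative_c_ser: "(c_ser has_field_derivative eval_fps (fps_deriv c_fps) z) (at z)"
  unfolding c_ser_def by (rule has_field_derivative_eval_fps) simp

lemma deriv_g_ser: "deriv g_ser z = eval_fps (fps_deriv g_fps) z"
  by (rule DERIV_imp_deriv[OF has_field_derivative_g_ser])

lemma isCont_g_ser: "isCont g_ser z"
  unfolding g_ser_def by (rule continuous_eval_fps) simp

lemma isCont_c_ser: "isCont c_ser z"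
  unfolding c_ser_def by (rule continuous_eval_fps) simp

lemma holomorphic_on_g_ser: "g_ser holomorphic_on A"
  unfolding g_ser_def by (intro holomorphic_on_eval_fps) simp

lemma holomorphic_on_c_ser: "c_ser holomorphic_on A"
  unfolding c_ser_def by (intro holomorphic_on_eval_fps) simp

lemma deriv_g_ser_of_real: "deriv g_ser (of_real h) = of_real (deriv g_ser h)"
  unfolding deriv_g_ser
proof (rule eval_fps_of_real)
  show "(fps_deriv g_fps :: 'a fps) $ n = of_real (fps_deriv g_fps $ n)" for n
    by (simp add: g_fps_def)
qed (use fps_conv_radius_deriv[of "g_fps :: 'a fps"] fps_conv_radius_deriv[of "g_fps :: real fps"] in simp_all)

lemma fps_deriv_g_fps_identity:
  "fps_const 2 * fps_X * fps_deriv g_fps = (c_fps - g_fps :: 'a :: field_char_0 fps)"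
proof (rule fps_ext)
  fix n :: nat
  show "(fps_const 2 * fps_X * fps_deriv g_fps) $ n = (c_fps - g_fps :: 'a fps) $ n"
  proof (cases n)
    case 0 then show ?thesis by (simp add: g_fps_def c_fps_def)
  next
    case (Suc m)
    have "(fps_const 2 * fps_X * fps_deriv g_fps) $ n = of_nat (2 * n) / (fact (Suc (2 * n)) :: 'a)"
      using Suc by (simp add: g_fps_def mult.assoc fps_X_mult_nth del: fact_Suc)
    also have "\<dots> = (c_fps - g_fps :: 'a fps) $ n"
      unfolding inverse_fact_diff[symmetric] by (simp add: g_fps_def c_fps_def del: fact_Suc)
    finally show ?thesis .
  qed
qed

lemma deriv_g_ser_identity: "2 * z * deriv g_ser z = c_ser z - g_ser z"
proof -
  have radius: "fps_conv_radius (fps_const 2 * fps_X :: 'a fps) = \<infinity>"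
    using fps_conv_radius_mult[of "fps_const 2" "fps_X :: 'a fps"] by simp
  have "2 * z * deriv g_ser z = eval_fps (fps_const 2 * fps_X) z * eval_fps (fps_deriv g_fps) z"
    by (subst eval_fps_mult) (simp_all add: deriv_g_ser)
  also have "\<dots> = eval_fps (fps_const 2 * fps_X * fps_deriv g_fps) z"
    using fps_conv_radius_deriv[of "g_fps :: 'a fps"] radius by (subst eval_fps_mult) simp_all
  also have "\<dots> = c_ser z - g_ser z"
    by (simp add: fps_deriv_g_fps_identity eval_fps_diff c_ser_def g_ser_def)
  finally show ?thesis .
qed

lemma g_ser_lt_c_ser:
  fixes h :: real
  assumes "0 < h"
  shows "g_ser h < c_ser h"
proof -
  define d :: "nat \<Rightarrow> real" where "d n = 1 / fact (2 * n) - 1 / fact (2 * n + 1)" for n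
  have diff_sums: "(\<lambda>n. d n * h ^ n) sums (c_ser h - g_ser h)"
    using sums_diff[OF c_ser_sums g_ser_sums] by (simp add: d_def algebra_simps)
  have "fact (2 * n) \<le> (fact (2 * n + 1) :: real)" for n by (rule fact_mono) simp
  hence "0 \<le> d n * h ^ n" for n
    using assms by (simp add: d_def divide_left_mono)
  moreover have "0 < d 1 * h ^ 1"
    using assms by (simp add: d_def numeral_3_eq_3 numeral_2_eq_2)
  ultimately have "0 < (\<Sum>n. d n * h ^ n)"
    by (rule suminf_pos2[OF sums_summable[OF diff_sums]])
  thus ?thesis using diff_sums by (simp add: sums_iff)
qed

lemma deriv_g_ser_pos:
  fixes h :: real
  assumes "- (pi ^ 2) \<le> h"
  shows "0 < deriv g_ser h"
proof (cases "h = 0")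
  case True
  then show ?thesis
    by (simp add: deriv_g_ser eval_fps_at_0 g_fps_def numeral_3_eq_3)
next
  case False
  hence deriv_eq: "deriv g_ser h = (c_ser h - g_ser h) / (2 * h)"
    using deriv_g_ser_identity[of h] by (simp add: field_simps)
  show ?thesis
  proof (cases "0 < h")
    case True
    then show ?thesis using g_ser_lt_c_ser deriv_eq by simp
  next
    case False
    with \<open>h \<noteq> 0\<close> have "h < 0" by simp
    define s where "s = sqrt (- h)"
    have "0 < s" using \<open>h < 0\<close> by (simp add: s_def)
    moreover have "s \<le> pi"
      using real_sqrt_le_mono[of "- h" "pi ^ 2"] assms by (simp add: s_def)
    ultimately have "cos s - sin s / s < 0"
      using sin_gt_mult_cos by (simp add: field_simps)
    hence "c_ser h - g_ser h < 0"
      using \<open>h < 0\<close> by (simp add: c_ser_nonpos g_ser_neg s_def)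
    with deriv_eq \<open>h < 0\<close> show ?thesis by (simp add: divide_neg_neg)
  qed
qed

lemma g_ser_strict_mono:
  fixes a b :: real
  assumes "- (pi ^ 2) \<le> a" "a < b"
  shows "g_ser a < g_ser b"
proof (rule DERIV_pos_imp_increasing[OF assms(2)])
  fix x assume "a \<le> x" "x \<le> b"
  thus "\<exists>y. (g_ser has_real_derivative y) (at x) \<and> 0 < y"
    using has_field_derivative_g_ser deriv_g_ser deriv_g_ser_pos assms by (metis order_trans)
qed

lemma g_ser_ge_linear:
  fixes h :: real
  assumes "0 \<le> h"
  shows "1 + h / 6 \<le> g_ser h"
proof -
  have "(\<Sum>n<2. h ^ n / fact (2 * n + 1)) \<le> (\<Sum>n. h ^ n / fact (2 * n + 1))"
    by (rule sum_le_suminf) (use g_ser_sums[of h] assms in \<open>auto simp: sums_iff\<close>)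
  thus ?thesis using g_ser_sums[of h] by (simp add: sums_iff numeral_3_eq_3 numeral_2_eq_2)
qed

section \<open>The inverse of g\<close>

lemma inj_on_g_ser: "inj_on g_ser {- (pi ^ 2)<..}"
  by (rule strict_mono_on_imp_inj_on) (auto simp: strict_mono_on_def intro: g_ser_strict_mono)

lemma ginv_g_ser: "- (pi ^ 2) < h \<Longrightarrow> ginv (g_ser h) = h"
  unfolding ginv_def gfun_eq_g_ser using inj_on_g_ser by (intro inv_into_f_f) auto

lemma g_ser_surj:
  assumes "0 < u"
  shows "u \<in> g_ser ` {- (pi ^ 2)<..}"
proof -
  have "- (pi ^ 2) \<le> 6 * u"
    using assms zero_le_power2[of pi] by linarith
  moreover have "g_ser (- (pi ^ 2)) \<le> u" "u \<le> g_ser (6 * u)"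
    using assms g_ser_ge_linear[of "6 * u"] by simp_all
  moreover have "continuous_on {- (pi ^ 2)..6 * u} g_ser"
    by (intro continuous_at_imp_continuous_on ballI isCont_g_ser)
  ultimately obtain h where h: "- (pi ^ 2) \<le> h" "g_ser h = u"
    using IVT' by blast
  moreover have "h \<noteq> - (pi ^ 2)" using h assms by auto
  ultimately show ?thesis by force
qed

lemma ginv_gt_minus_pi_sq: "0 < u \<Longrightarrow> - (pi ^ 2) < ginv u"
  using inv_into_into[OF g_ser_surj] unfolding ginv_def gfun_eq_g_ser by simp

lemma g_ser_ginv: "0 < u \<Longrightarrow> g_ser (ginv u) = u"
  unfolding ginv_def gfun_eq_g_ser by (rule f_inv_into_f[OF g_ser_surj])

lemma ginv_1 [simp]: "ginv 1 = 0"
  using ginv_g_ser[of 0] by simp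

lemma isCont_ginv:
  assumes "0 < u"
  shows "isCont ginv u"
proof -
  define h0 where "h0 = ginv u"
  have h0: "- (pi ^ 2) < h0" "g_ser h0 = u"
    using assms by (simp_all add: h0_def ginv_gt_minus_pi_sq g_ser_ginv)
  have "isCont ginv (g_ser h0)"
  proof (rule isCont_inverse_function[where f = g_ser and x = h0 and d = "(h0 + pi ^ 2) / 2"])
    show "0 < (h0 + pi ^ 2) / 2" using h0 by simp
    fix z assume "\<bar>z - h0\<bar> \<le> (h0 + pi ^ 2) / 2"
    hence "h0 - (h0 + pi ^ 2) / 2 \<le> z" using abs_ge_minus_self[of "z - h0"] by linarith
    hence "- (pi ^ 2) < z" using h0(1) by (simp add: field_simps)
    thus "ginv (g_ser z) = z" by (rule ginv_g_ser)
  qed (rule isCont_g_ser)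
  thus ?thesis using h0(2) by simp
qed

lemma has_holomorphic_extension_at_ginv:
  assumes "0 < u0"
  shows "has_holomorphic_extension_at ginv u0"
proof -
  define h0 where "h0 = ginv u0"
  have h0: "- (pi ^ 2) < h0" "g_ser h0 = u0"
    using assms by (simp_all add: h0_def ginv_gt_minus_pi_sq g_ser_ginv)
  have "deriv g_ser (of_real h0 :: complex) \<noteq> 0"
    using deriv_g_ser_pos[of h0] h0(1) by (simp add: deriv_g_ser_of_real)
  then obtain r where "0 < r" and inj: "inj_on g_ser (ball (of_real h0 :: complex) r)"
    using has_complex_derivative_locally_injective[OF holomorphic_on_g_ser, of "of_real h0" UNIV] by auto
  obtain Q where Q_hol: "Q holomorphic_on g_ser ` ball (of_real h0 :: complex) r"
    and Q_inv: "\<And>z. z \<in> ball (of_real h0 :: complex) r \<Longrightarrow> Q (g_ser z) = z"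
    using holomorphic_has_inverse[OF holomorphic_on_g_ser open_ball inj] by metis
  have "open (g_ser ` ball (of_real h0 :: complex) r)"
    by (rule open_mapping_thm3[OF holomorphic_on_g_ser open_ball inj])
  moreover have "of_real u0 \<in> g_ser ` ball (of_real h0 :: complex) r"
    using \<open>0 < r\<close> h0(2) by (auto simp: g_ser_of_real intro!: image_eqI[of _ _ "of_real h0"])
  ultimately obtain e1 where "0 < e1" and e1: "ball (of_real u0) e1 \<subseteq> g_ser ` ball (of_real h0 :: complex) r"
    using openE by blast
  obtain \<delta> where "0 < \<delta>" and \<delta>: "\<And>u. \<bar>u - u0\<bar> < \<delta> \<Longrightarrow> \<bar>ginv u - h0\<bar> < r"
    using isCont_ginv[OF assms] \<open>0 < r\<close> unfolding continuous_at_eps_delta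
    by (auto simp: dist_real_def h0_def)
  define e where "e = min (min e1 \<delta>) u0"
  have "0 < e" using \<open>0 < e1\<close> \<open>0 < \<delta>\<close> assms by (simp add: e_def)
  moreover have "Q holomorphic_on ball (of_real u0) e"
  proof (rule holomorphic_on_subset[OF Q_hol])
    have "ball (of_real u0) e \<subseteq> ball (of_real u0 :: complex) e1"
      by (rule subset_ball) (simp add: e_def)
    with e1 show "ball (of_real u0) e \<subseteq> g_ser ` ball (of_real h0 :: complex) r" by blast
  qed
  moreover have "Q (of_real u) = of_real (ginv u)" if "\<bar>u - u0\<bar> < e" for u
  proof -
    have "0 < u" "\<bar>ginv u - h0\<bar> < r" using that \<delta> by (auto simp: e_def)
    hence "of_real (ginv u) \<in> ball (of_real h0 :: complex) r"
      by (simp add: dist_norm abs_minus_commute flip: of_real_diff)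
    from Q_inv[OF this] show ?thesis
      using \<open>0 < u\<close> by (simp add: g_ser_of_real g_ser_ginv)
  qed
  ultimately show ?thesis
    unfolding has_holomorphic_extension_at_def by blast
qed

section \<open>The function F\<close>

definition v_ser :: "'a :: {banach, real_normed_field} \<Rightarrow> 'a" where
  "v_ser z = 2 - 2 * c_ser z + z * g_ser z"

lemma v_ser_of_real: "v_ser (of_real x) = of_real (v_ser x)"
  by (simp add: v_ser_def g_ser_of_real c_ser_of_real)

lemma holomorphic_on_v_ser: "v_ser holomorphic_on A"
  unfolding v_ser_def[abs_def] by (intro holomorphic_intros holomorphic_on_g_ser holomorphic_on_c_ser)

lemma has_field_derivative_v_ser_0: "(v_ser has_field_derivative 0) (at (0 :: 'a :: {banach, real_normed_field}))"
proof -
  have "(c_ser has_field_derivative 1 / 2) (at (0 :: 'a))"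
    using has_field_derivative_c_ser[of "0 :: 'a"] by (simp add: eval_fps_at_0 c_fps_def)
  then show ?thesis
    unfolding v_ser_def[abs_def] by (auto intro!: derivative_eq_intros has_field_derivative_g_ser)
qed

lemma Ffun_eq_v_ser_ginv:
  assumes "x < 1"
  shows "Ffun x = v_ser (ginv (1 - x))"
proof -
  define u where "u = 1 - x"
  define h where "h = ginv u"
  have "0 < u" using assms by (simp add: u_def)
  have h: "- (pi ^ 2) < h" "g_ser h = u"
    using \<open>0 < u\<close> by (simp_all add: h_def ginv_gt_minus_pi_sq g_ser_ginv)
  have "u * sqrt ((1 / u) ^ 2 + h) = sqrt (u ^ 2 * ((1 / u) ^ 2 + h))"
    using \<open>0 < u\<close> by (simp add: real_sqrt_mult)
  also have "u ^ 2 * ((1 / u) ^ 2 + h) = c_ser h ^ 2"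
    using \<open>0 < u\<close> h(2) c_ser_sq_minus_g_ser_sq[of h] by (simp add: field_simps power2_eq_square)
  finally have sqrt_eq: "u * sqrt ((1 / u) ^ 2 + h) = \<bar>c_ser h\<bar>" by simp
  have "Ffun x = u * (2 * (1 / u) - 2 * sgn (4 * h + pi ^ 2) * sqrt ((1 / u) ^ 2 + h) + h)"
    by (simp add: Ffun_def Gfun_def h_def u_def)
  also have "\<dots> = 2 - 2 * (sgn (4 * h + pi ^ 2) * (u * sqrt ((1 / u) ^ 2 + h))) + u * h"
    using \<open>0 < u\<close> by (simp add: field_simps)
  also have "\<dots> = v_ser h"
    unfolding sqrt_eq sgn_mult_abs_c_ser[OF h(1)] v_ser_def using h(2) by simp
  finally show ?thesis by (simp add: h_def u_def)
qed

lemma Ffun_0: "Ffun 0 = 0"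
  by (simp add: Ffun_eq_v_ser_ginv v_ser_def)

lemma deriv_Ffun_0: "deriv Ffun 0 = 0"
proof -
  obtain D where "(ginv has_real_derivative D) (at 1)"
    using has_holomorphic_extension_at_imp_DERIV[OF has_holomorphic_extension_at_ginv[of 1]] by auto
  hence "(ginv has_real_derivative D) (at (1 - 0))" by simp
  moreover have "((\<lambda>x. 1 - x) has_real_derivative -1) (at 0)"
    by (auto intro!: derivative_eq_intros)
  ultimately have "((\<lambda>x. ginv (1 - x)) has_real_derivative D * -1) (at 0)"
    by (rule DERIV_chain2)
  moreover have "(v_ser has_real_derivative 0) (at (ginv (1 - 0)))"
    using has_field_derivative_v_ser_0 by simp
  ultimately have "((\<lambda>x. v_ser (ginv (1 - x))) has_real_derivative 0 * (D * -1)) (at 0)"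
    by (rule DERIV_chain2[rotated])
  hence "((\<lambda>x. v_ser (ginv (1 - x))) has_real_derivative 0) (at 0)"
    by simp
  hence "(Ffun has_real_derivative 0) (at 0)"
    by (rule has_field_derivative_transform_within_open[of _ _ _ "{..<1}"])
       (auto simp: Ffun_eq_v_ser_ginv)
  thus ?thesis by (rule DERIV_imp_deriv)
qed

lemma has_holomorphic_extension_at_Ffun:
  assumes "x0 < 1"
  shows "has_holomorphic_extension_at Ffun x0"
proof -
  obtain e Q where "0 < e" and Q_hol: "Q holomorphic_on ball (of_real (1 - x0)) e"
    and Q_eq: "\<And>u. \<bar>u - (1 - x0)\<bar> < e \<Longrightarrow> Q (of_real u) = of_real (ginv u)"
    using has_holomorphic_extension_at_ginv[of "1 - x0"] assms
    unfolding has_holomorphic_extension_at_def by auto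
  define e' where "e' = min e (1 - x0)"
  have "(\<lambda>z. 1 - z) ` ball (of_real x0) e' \<subseteq> ball (of_real (1 - x0) :: complex) e"
    by (auto simp: e'_def dist_norm norm_minus_commute algebra_simps)
  hence "(Q \<circ> (\<lambda>z. 1 - z)) holomorphic_on ball (of_real x0) e'"
    by (intro holomorphic_on_compose_gen[OF _ Q_hol] holomorphic_intros)
  hence "(v_ser \<circ> (Q \<circ> (\<lambda>z. 1 - z))) holomorphic_on ball (of_real x0) e'"
    by (rule holomorphic_on_compose[OF _ holomorphic_on_v_ser])
  moreover have "v_ser (Q (1 - of_real x)) = of_real (Ffun x)" if "\<bar>x - x0\<bar> < e'" for x
  proof -
    have "x < 1" "\<bar>(1 - x) - (1 - x0)\<bar> < e" using that by (auto simp: e'_def)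
    thus ?thesis
      using Q_eq[of "1 - x"] by (simp add: v_ser_of_real Ffun_eq_v_ser_ginv)
  qed
  moreover have "0 < e'" using \<open>0 < e\<close> assms by (simp add: e'_def)
  ultimately show ?thesis
    unfolding has_holomorphic_extension_at_def o_def by auto
qed

lemma Ffun_le_4:
  assumes "0 \<le> x" "x < 1"
  shows "Ffun x \<le> 4"
proof -
  define h where "h = ginv (1 - x)"
  have h: "- (pi ^ 2) < h" "g_ser h = 1 - x"
    using assms by (simp_all add: h_def ginv_gt_minus_pi_sq g_ser_ginv)
  have "h \<le> 0"
  proof (rule ccontr)
    assume "\<not> h \<le> 0"
    hence "g_ser 0 < g_ser h" using g_ser_strict_mono[of 0 h] by simp
    with h(2) assms show False by simp
  qed
  show ?thesis
  proof (cases "h = 0")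
    case True then show ?thesis using assms by (simp add: Ffun_eq_v_ser_ginv v_ser_def flip: h_def)
  next
    case False
    with \<open>h \<le> 0\<close> have "h < 0" by simp
    define s where "s = sqrt (- h)"
    have "0 < s" "h = - (s ^ 2)" using \<open>h < 0\<close> by (auto simp: s_def)
    have "s < pi"
      using real_sqrt_less_mono[of "- h" "pi ^ 2"] h(1) by (simp add: s_def)
    have "g_ser h = sin s / s"
      using \<open>h < 0\<close> by (simp add: g_ser_neg s_def)
    hence "h * g_ser h = - (s * sin s)"
      using \<open>0 < s\<close> \<open>h = - (s ^ 2)\<close> by (simp add: power2_eq_square)
    moreover have "0 \<le> s * sin s"
      using \<open>0 < s\<close> \<open>s < pi\<close> by (intro mult_nonneg_nonneg sin_ge_zero) auto
    ultimately have "v_ser h \<le> 2 - 2 * cos s"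
      using \<open>h < 0\<close> by (simp add: v_ser_def c_ser_nonpos flip: s_def)
    moreover have "Ffun x = v_ser h"
      using assms by (simp add: Ffun_eq_v_ser_ginv h_def)
    ultimately show ?thesis
      using cos_ge_minus_one[of s] by linarith
  qed
qed

(* xi -> 1 corresponds to h = g^-1(1 - xi) -> -pi^2, where v takes the value 4. *)
lemma Ffun_approaches_4:
  assumes "0 < \<epsilon>"
  shows "\<exists>x. 0 \<le> x \<and> x < 1 \<and> 4 - \<epsilon> < Ffun x"
proof -
  have "isCont v_ser (- (pi ^ 2))"
    unfolding v_ser_def[abs_def] by (intro continuous_intros isCont_c_ser isCont_g_ser)
  moreover have "v_ser (- (pi ^ 2)) = 4" by (simp add: v_ser_def)
  ultimately obtain d where "0 < d" and d: "\<And>h. \<bar>h - - (pi ^ 2)\<bar> < d \<Longrightarrow> \<bar>v_ser h - 4\<bar> < \<epsilon>"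
    using assms unfolding isCont_def LIM_eq by (metis dist_real_def real_norm_def diff_self abs_zero)
  define h where "h = - (pi ^ 2) + min (d / 2) (pi ^ 2 / 2)"
  have "0 < pi ^ 2" by simp
  hence "0 < min (d / 2) (pi ^ 2 / 2)" "min (d / 2) (pi ^ 2 / 2) \<le> d / 2" "min (d / 2) (pi ^ 2 / 2) \<le> pi ^ 2 / 2"
    using \<open>0 < d\<close> by auto
  hence h: "- (pi ^ 2) < h" "h < 0" "\<bar>h - - (pi ^ 2)\<bar> < d"
    using \<open>0 < d\<close> \<open>0 < pi ^ 2\<close> unfolding h_def by linarith+
  define x where "x = 1 - g_ser h"
  have "0 < g_ser h" "g_ser h < 1"
    using g_ser_strict_mono[of "- (pi ^ 2)" h] g_ser_strict_mono[of h 0] h by auto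
  hence "0 \<le> x" "x < 1" by (simp_all add: x_def)
  moreover have "Ffun x = v_ser h"
    using \<open>x < 1\<close> ginv_g_ser[OF h(1)] by (simp add: Ffun_eq_v_ser_ginv x_def)
  ultimately show ?thesis
    using d[OF h(3)] by auto
qed

theorem corollary3p3:
  assumes "\<forall>n\<ge>2. acoef n > 0"
  shows "(\<lambda>n. acoef (n + 2)) sums 4"
proof -
  have derivs_nonneg: "0 \<le> (deriv ^^ n) Ffun 0" for n
  proof (cases "2 \<le> n")
    case True
    with assms show ?thesis by (auto simp: acoef_def zero_less_divide_iff)
  next
    case False
    hence "n = 0 \<or> n = 1" by linarith
    thus ?thesis by (auto simp: Ffun_0 deriv_Ffun_0)
  qed
  hence acoef_nonneg: "0 \<le> acoef n" for n
    by (simp add: acoef_def)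
  have ext: "has_holomorphic_extension_at Ffun c" if "0 \<le> c" "c < 1" for c
    using that by (intro has_holomorphic_extension_at_Ffun)
  have sums: "(\<lambda>n. acoef n * x ^ n) sums Ffun x" if "0 \<le> x" "x < 1" for x
    using Taylor_sums_Pringsheim[OF ext derivs_nonneg that] by (simp add: acoef_def)
  have "acoef sums 4"
    by (rule sums_eq_sup_of_nonneg_power_series[OF acoef_nonneg sums Ffun_le_4 Ffun_approaches_4])
  hence "(\<lambda>n. acoef (n + 2)) sums (4 - (\<Sum>n<2. acoef n))"
    by (rule sums_split_initial_segment)
  thus ?thesis
    by (simp add: acoef_def numeral_2_eq_2 Ffun_0 deriv_Ffun_0)
qed

end
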